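(* Let $m,n,k$ be positive integers. Then \begin{align*} |\mathrm{WHom}(P_m,P_{n}\square P_{k})|=&\,4\sum_{i=0}^{\lfloor n/2\rfloor-1}\sum_{j=0}^{\lfloor k/2\rfloor-1}|\mathrm{WHom}^{ij}(P_m,P_{n}\square P_{k})| +(1-(-1)^n)\sum_{j=0}^{\lfloor k/2\rfloor-1}|\mathrm{WHom}^{\lfloor n/2\rfloor j}(P_m,P_{n}\square P_{k})|\\ &+(1-(-1)^k)\sum_{i=0}^{\lfloor n/2\rfloor-1}|\mathrm{WHom}^{i\lfloor k/2\rfloor}(P_m,P_{n}\square P_{k})| +\tfrac14(1-(-1)^n)(1-(-1)^k)\,|\mathrm{WHom}^{\lfloor n/2\rfloor\lfloor k/2\rfloor}(P_m,P_{n}\square P_{k})|, \end{align*} where, for $0\le i\le n-1$ and $0\le j\le k-1$, $$|\mathrm{WHom}^{ij}(P_m,P_n\square P_k)|=\sum_{h=0}^{m-1}\binom{m-1}{h}\,|\mathrm{Hom}^i(P_{h+1},P_n)|\,|\mathrm{WHom}^j(P_{m-h},P_k)|.$$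
   Context: For a positive integer $n$, $P_n$ denotes the path with vertex set $\{0,1,\dots,n-1\}$ and edge set $\{\{i,i+1\} : i=0,\dots,n-2\}$. The Cartesian product $P_n\square P_k$ has vertex set $\{0,\dots,n-1\}\times\{0,\dots,k-1\}$, with $\{(a,u),(b,v)\}$ an edge iff either $a=b$ and $\{u,v\}\in E(P_k)$, or $\{a,b\}\in E(P_n)$ and $u=v$. A homomorphism $f:G\to H$ is a map $V(G)\to V(H)$ with $\{f(x),f(y)\}\in E(H)$ for all $\{x,y\}\in E(G)$; a weak homomorphism is a map with $f(x)=f(y)$ or $\{f(x),f(y)\}\in E(H)$ for all $\{x,y\}\in E(G)$. $\mathrm{WHom}(G,H)$ is the set of weak homomorphisms from $G$ to $H$. $\mathrm{Hom}^i(P_a,P_n)$ is the set of homomorphisms $f:P_a\to P_n$ with $f(0)=i$; $\mathrm{WHom}^j(P_a,P_k)$ is the set of weak homomorphisms $f:P_a\to P_k$ with $f(0)=j$; $\mathrm{WHom}^{ij}(P_m,P_n\square P_k)$ is the set of weak homomorphisms $f:P_m\to P_n\square P_k$ with $f(0)=(i,j)$. *)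

theory Defs
  imports Complex_Main "HOL-Library.FuncSet"
begin

text \<open>A (simple) graph is represented as a pair (vertex set, symmetric adjacency relation).
Maps V(G) -> V(H) are represented as extensional functions in PiE (fst G) (\<lambda>_. fst H).\<close>

type_synonym 'a graph = "'a set \<times> ('a \<Rightarrow> 'a \<Rightarrow> bool)"

definition Path :: "nat \<Rightarrow> nat graph" where
  "Path n = ({0..<n}, \<lambda>u v. u < n \<and> v < n \<and> (v = u + 1 \<or> u = v + 1))"

definition box :: "'a graph \<Rightarrow> 'b graph \<Rightarrow> ('a \<times> 'b) graph" where
  "box G H = (fst G \<times> fst H,
     \<lambda>(a, u) (b, v). (a = b \<and> a \<in> fst G \<and> snd H u v) \<or> (u = v \<and> u \<in> fst H \<and> snd G a b))"

definition Hom :: "'a graph \<Rightarrow> 'b graph \<Rightarrow> ('a \<Rightarrow> 'b) set" where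
  "Hom G H = {f \<in> fst G \<rightarrow>\<^sub>E fst H. \<forall>x y. snd G x y \<longrightarrow> snd H (f x) (f y)}"

definition WHom :: "'a graph \<Rightarrow> 'b graph \<Rightarrow> ('a \<Rightarrow> 'b) set" where
  "WHom G H = {f \<in> fst G \<rightarrow>\<^sub>E fst H. \<forall>x y. snd G x y \<longrightarrow> f x = f y \<or> snd H (f x) (f y)}"

definition HomP :: "nat \<Rightarrow> nat \<Rightarrow> nat \<Rightarrow> (nat \<Rightarrow> nat) set" where
  "HomP i a n = {f \<in> Hom (Path a) (Path n). f 0 = i}"

definition WHomP :: "nat \<Rightarrow> nat \<Rightarrow> nat \<Rightarrow> (nat \<Rightarrow> nat) set" where
  "WHomP j a k = {f \<in> WHom (Path a) (Path k). f 0 = j}"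

definition WHomPP :: "nat \<Rightarrow> nat \<Rightarrow> nat \<Rightarrow> nat \<Rightarrow> nat \<Rightarrow> (nat \<Rightarrow> nat \<times> nat) set" where
  "WHomPP i j m n k = {f \<in> WHom (Path m) (box (Path n) (Path k)). f 0 = (i, j)}"

end

theory Submission
  imports Defs
begin

text \<open>
A weak homomorphism from \<open>P\<^sub>m\<close> is a walk of length \<open>m - 1\<close> in the reflexive closure of the
target graph. In \<open>P\<^sub>n \<box> P\<^sub>k\<close> every step of such a walk either moves the first coordinate
along an edge of \<open>P\<^sub>n\<close>, or leaves it fixed and makes a weak step in \<open>P\<^sub>k\<close>. Choosing which
\<open>h\<close> of the \<open>m - 1\<close> steps are of the first kind yields the binomial convolution; formally, both
sides satisfy the same Pascal-type recurrence in the length of the walk.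

The reflections \<open>i \<mapsto> n - 1 - i\<close> and \<open>j \<mapsto> k - 1 - j\<close> are automorphisms of the grid, so the
number of walks only depends on the orbit of the starting vertex. Folding the sum over all
starting vertices twice gives the first formula; the middle row or column survives exactly when
\<open>n\<close> resp. \<open>k\<close> is odd.
\<close>

definition walks :: "'a set \<Rightarrow> ('a \<Rightarrow> 'a \<Rightarrow> bool) \<Rightarrow> nat \<Rightarrow> 'a \<Rightarrow> (nat \<Rightarrow> 'a) set" where
  "walks V R a v = {f \<in> {0..<Suc a} \<rightarrow>\<^sub>E V. f 0 = v \<and> (\<forall>x<a. R (f x) (f (Suc x)))}"

lemma finite_walks: "finite V \<Longrightarrow> finite (walks V R a v)"
  unfolding walks_def by (rule finite_subset[of _ "{0..<Suc a} \<rightarrow>\<^sub>E V"]) (auto intro: finite_PiE)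

lemma card_walks_0: "v \<in> V \<Longrightarrow> card (walks V R 0 v) = 1"
proof -
  assume "v \<in> V"
  then have "walks V R 0 v = {\<lambda>x. if x = 0 then v else undefined}"
    unfolding walks_def by (auto simp: PiE_def extensional_def fun_eq_iff)
  then show ?thesis by simp
qed

lemma card_walks_Suc:
  assumes "finite V" and "v \<in> V"
  shows "card (walks V R (Suc a) v) = (\<Sum>w\<in>{w\<in>V. R v w}. card (walks V R a w))"
proof -
  define split_first where
    "split_first f = (f 1, \<lambda>x. if x < Suc a then f (Suc x) else undefined)" for f :: "nat \<Rightarrow> 'a"
  define prepend where
    "prepend p = (\<lambda>x. if x = 0 then v else if x < Suc (Suc a) then snd p (x - 1) else undefined)"
    for p :: "'a \<times> (nat \<Rightarrow> 'a)"
  have "bij_betw split_first (walks V R (Suc a) v) (SIGMA w:{w\<in>V. R v w}. walks V R a w)"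
  proof (rule bij_betw_byWitness[where f' = prepend])
    show "\<forall>f\<in>walks V R (Suc a) v. prepend (split_first f) = f"
      unfolding walks_def split_first_def prepend_def by (auto simp: fun_eq_iff PiE_def extensional_def)
    show "\<forall>p\<in>(SIGMA w:{w\<in>V. R v w}. walks V R a w). split_first (prepend p) = p"
      unfolding walks_def split_first_def prepend_def by (auto simp: fun_eq_iff PiE_def extensional_def)
    show "split_first ` walks V R (Suc a) v \<subseteq> (SIGMA w:{w\<in>V. R v w}. walks V R a w)"
      unfolding walks_def split_first_def by (auto simp: PiE_def extensional_def)
    show "prepend ` (SIGMA w:{w\<in>V. R v w}. walks V R a w) \<subseteq> walks V R (Suc a) v"
      unfolding walks_def prepend_def using \<open>v \<in> V\<close>
      by (auto simp: PiE_def extensional_def Pi_def gr0_conv_Suc)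
  qed
  then have "card (walks V R (Suc a) v) = card (SIGMA w:{w\<in>V. R v w}. walks V R a w)"
    by (rule bij_betw_same_card)
  also have "\<dots> = (\<Sum>w\<in>{w\<in>V. R v w}. card (walks V R a w))"
    using assms by (simp add: finite_walks)
  finally show ?thesis .
qed

lemma card_walks_reflclp_Suc:
  assumes "finite V" and "v \<in> V" and "\<not> R v v"
  shows "card (walks V R\<^sup>=\<^sup>= (Suc a) v) =
    card (walks V R\<^sup>=\<^sup>= a v) + (\<Sum>w\<in>{w\<in>V. R v w}. card (walks V R\<^sup>=\<^sup>= a w))"
proof -
  have "{w\<in>V. R\<^sup>=\<^sup>= v w} = insert v {w\<in>V. R v w}"
    using assms(2) by auto
  then show ?thesis
    using assms by (simp add: card_walks_Suc)
qed

lemma card_walks_involution: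
  assumes involution: "\<And>x. x \<in> V \<Longrightarrow> \<sigma> x \<in> V \<and> \<sigma> (\<sigma> x) = x"
    and preserves: "\<And>x y. x \<in> V \<Longrightarrow> y \<in> V \<Longrightarrow> R x y \<Longrightarrow> R (\<sigma> x) (\<sigma> y)"
    and "v \<in> V"
  shows "card (walks V R a (\<sigma> v)) = card (walks V R a v)"
proof -
  define T where "T f = (\<lambda>x. if x < Suc a then \<sigma> (f x) else undefined)" for f :: "nat \<Rightarrow> 'a"
  have "bij_betw T (walks V R a v) (walks V R a (\<sigma> v))"
  proof (rule bij_betw_byWitness[where f' = T])
    show "\<forall>f\<in>walks V R a v. T (T f) = f" "\<forall>f\<in>walks V R a (\<sigma> v). T (T f) = f"
      unfolding walks_def T_def using involution by (auto simp: fun_eq_iff PiE_def extensional_def Pi_def)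
    show "T ` walks V R a v \<subseteq> walks V R a (\<sigma> v)" "T ` walks V R a (\<sigma> v) \<subseteq> walks V R a v"
      unfolding walks_def T_def using involution preserves \<open>v \<in> V\<close>
      by (auto simp: PiE_def extensional_def Pi_def)
  qed
  then show ?thesis by (simp add: bij_betw_same_card)
qed

lemma fst_Path [simp]: "fst (Path n) = {0..<n}"
  by (simp add: Path_def)

lemma fst_box [simp]: "fst (box G H) = fst G \<times> fst H"
  by (simp add: box_def)

lemma symp_Path: "symp (snd (Path n))"
  by (auto simp: Path_def symp_def)

lemma irreflp_Path: "irreflp (snd (Path n))"
  by (simp add: Path_def irreflp_def)

lemma symp_box: "symp (snd G) \<Longrightarrow> symp (snd H) \<Longrightarrow> symp (snd (box G H))"
  by (auto simp: box_def symp_def)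

lemma Path_reflect: "snd (Path n) x y \<Longrightarrow> snd (Path n) (n - Suc x) (n - Suc y)"
  by (auto simp: Path_def)

lemma Path_edges_preserved_iff:
  assumes "symp R"
  shows "(\<forall>x y. snd (Path (Suc a)) x y \<longrightarrow> R (f x) (f y)) \<longleftrightarrow> (\<forall>x<a. R (f x) (f (Suc x)))"
  using assms by (auto simp: Path_def symp_def)

lemma Hom_Path_from_eq_walks:
  assumes "symp (snd G)"
  shows "{f \<in> Hom (Path (Suc a)) G. f 0 = v} = walks (fst G) (snd G) a v"
  using Path_edges_preserved_iff[OF assms] unfolding Hom_def walks_def by auto

lemma WHom_Path_from_eq_walks:
  assumes "symp (snd G)"
  shows "{f \<in> WHom (Path (Suc a)) G. f 0 = v} = walks (fst G) (snd G)\<^sup>=\<^sup>= a v"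
proof -
  have "symp (snd G)\<^sup>=\<^sup>="
    using assms by (auto simp: symp_def)
  from Path_edges_preserved_iff[OF this]
  have "(\<forall>x y. snd (Path (Suc a)) x y \<longrightarrow> f x = f y \<or> snd G (f x) (f y)) \<longleftrightarrow>
      (\<forall>x<a. (snd G)\<^sup>=\<^sup>= (f x) (f (Suc x)))" for f
    by (simp add: disj_commute)
  then show ?thesis
    unfolding WHom_def walks_def by auto
qed

lemma card_WHom_Path_eq_sum:
  assumes "0 < m" and "finite (fst G)"
  shows "card (WHom (Path m) G) = (\<Sum>v\<in>fst G. card {f \<in> WHom (Path m) G. f 0 = v})"
proof -
  have "finite (WHom (Path m) G)"
    by (rule finite_subset[of _ "{0..<m} \<rightarrow>\<^sub>E fst G"]) (auto simp: WHom_def intro: finite_PiE assms(2))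
  have "WHom (Path m) G = (\<Union>v\<in>fst G. {f \<in> WHom (Path m) G. f 0 = v})"
    using assms(1) by (auto simp: WHom_def PiE_iff)
  also have "card \<dots> = (\<Sum>v\<in>fst G. card {f \<in> WHom (Path m) G. f 0 = v})"
    using assms(2) \<open>finite (WHom (Path m) G)\<close> by (intro card_UN_disjoint) auto
  finally show ?thesis .
qed

lemma card_walks_box_Suc:
  fixes G :: "'a graph" and H :: "'b graph"
  assumes "finite (fst G)" "finite (fst H)" "irreflp (snd G)" "irreflp (snd H)"
    and "i \<in> fst G" "j \<in> fst H"
  defines "W a p \<equiv> card (walks (fst G \<times> fst H) (snd (box G H))\<^sup>=\<^sup>= a p)"
  shows "W (Suc a) (i, j) =
    W a (i, j) + (\<Sum>i'\<in>{i'\<in>fst G. snd G i i'}. W a (i', j)) + (\<Sum>j'\<in>{j'\<in>fst H. snd H j j'}. W a (i, j'))"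
proof -
  let ?NG = "{i'\<in>fst G. snd G i i'}" and ?NH = "{j'\<in>fst H. snd H j j'}"
  have neighbours: "{p\<in>fst G \<times> fst H. snd (box G H) (i, j) p} = (\<lambda>i'. (i', j)) ` ?NG \<union> (\<lambda>j'. (i, j')) ` ?NH"
    using assms(5,6) by (auto simp: box_def)
  have "(\<lambda>i'. (i', j)) ` ?NG \<inter> (\<lambda>j'. (i, j')) ` ?NH = {}"
    using assms(3) by (auto simp: irreflp_def)
  moreover have "finite ?NG" "finite ?NH"
    using assms(1,2) by simp_all
  ultimately have "(\<Sum>p\<in>{p\<in>fst G \<times> fst H. snd (box G H) (i, j) p}. W a p) =
      (\<Sum>i'\<in>?NG. W a (i', j)) + (\<Sum>j'\<in>?NH. W a (i, j'))"
    unfolding neighbours by (simp add: sum.union_disjoint sum.reindex inj_on_def)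
  moreover have "\<not> snd (box G H) (i, j) (i, j)"
    using assms(3,4) by (auto simp: box_def irreflp_def)
  ultimately show ?thesis
    using assms(1,2,5,6) unfolding W_def by (simp add: card_walks_reflclp_Suc add.assoc)
qed

lemma sum_binomial_Suc:
  fixes f :: "nat \<Rightarrow> nat \<Rightarrow> 'a::comm_semiring_1"
  shows "(\<Sum>h\<le>Suc M. of_nat (Suc M choose h) * f h (Suc M - h)) =
    (\<Sum>h\<le>M. of_nat (M choose h) * f h (Suc (M - h))) + (\<Sum>h\<le>M. of_nat (M choose h) * f (Suc h) (M - h))"
proof -
  have "(\<Sum>h\<le>M. of_nat (M choose h) * f h (Suc (M - h))) = (\<Sum>h\<le>Suc M. of_nat (M choose h) * f h (Suc M - h))"
    by (simp add: Suc_diff_le binomial_eq_0)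
  also have "\<dots> = f 0 (Suc M) + (\<Sum>h\<le>M. of_nat (M choose Suc h) * f (Suc h) (M - h))"
    by (simp add: sum.atMost_Suc_shift del: sum.atMost_Suc)
  finally show ?thesis
    by (simp add: sum.atMost_Suc_shift sum.distrib algebra_simps del: sum.atMost_Suc)
qed

lemma card_weak_walks_box:
  fixes G :: "'a graph" and H :: "'b graph"
  assumes "finite (fst G)" "finite (fst H)" "irreflp (snd G)" "irreflp (snd H)"
    and "i \<in> fst G" "j \<in> fst H"
  shows "card (walks (fst G \<times> fst H) (snd (box G H))\<^sup>=\<^sup>= M (i, j)) =
    (\<Sum>h\<le>M. (M choose h) * card (walks (fst G) (snd G) h i) * card (walks (fst H) (snd H)\<^sup>=\<^sup>= (M - h) j))"
  using assms(5,6)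
proof (induction M arbitrary: i j)
  case 0
  then show ?case by (simp add: card_walks_0)
next
  case (Suc M)
  define P where "P h i' = card (walks (fst G) (snd G) h i')" for h i'
  define Q where "Q t j' = card (walks (fst H) (snd H)\<^sup>=\<^sup>= t j')" for t j'
  define W where "W t p = card (walks (fst G \<times> fst H) (snd (box G H))\<^sup>=\<^sup>= t p)" for t p
  define C where "C i' j' = (\<Sum>h\<le>M. (M choose h) * (P h i' * Q (M - h) j'))" for i' j'
  let ?NG = "{i'\<in>fst G. snd G i i'}" and ?NH = "{j'\<in>fst H. snd H j j'}"
  have IH: "W M (i', j') = C i' j'" if "i' \<in> fst G" "j' \<in> fst H" for i' j'
    using Suc.IH[OF that] unfolding W_def C_def P_def Q_def by (simp only: mult.assoc)
  have moves_snd: "C i j + (\<Sum>j'\<in>?NH. C i j') = (\<Sum>h\<le>M. (M choose h) * (P h i * Q (Suc (M - h)) j))"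
  proof -
    have "Q (Suc t) j = Q t j + (\<Sum>j'\<in>?NH. Q t j')" for t
      unfolding Q_def using assms(2,4) Suc.prems(2) by (simp add: card_walks_reflclp_Suc irreflp_def)
    then show ?thesis
      unfolding C_def by (simp add: sum.distrib sum_distrib_left sum.swap[of _ ?NH] algebra_simps)
  qed
  have moves_fst: "(\<Sum>i'\<in>?NG. C i' j) = (\<Sum>h\<le>M. (M choose h) * (P (Suc h) i * Q (M - h) j))"
  proof -
    have "P (Suc h) i = (\<Sum>i'\<in>?NG. P h i')" for h
      unfolding P_def using assms(1) Suc.prems(1) by (simp add: card_walks_Suc)
    then show ?thesis
      unfolding C_def by (simp add: sum_distrib_left sum_distrib_right sum.swap[of _ ?NG] algebra_simps)
  qed
  have "W (Suc M) (i, j) = W M (i, j) + (\<Sum>i'\<in>?NG. W M (i', j)) + (\<Sum>j'\<in>?NH. W M (i, j'))"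
    using card_walks_box_Suc[OF assms(1-4) Suc.prems] unfolding W_def .
  also have "\<dots> = (C i j + (\<Sum>j'\<in>?NH. C i j')) + (\<Sum>i'\<in>?NG. C i' j)"
    using Suc.prems by (simp add: IH ac_simps)
  also have "\<dots> = (\<Sum>h\<le>Suc M. (Suc M choose h) * (P h i * Q (Suc M - h) j))"
    unfolding moves_snd moves_fst using sum_binomial_Suc[of M "\<lambda>h t. P h i * Q t j"] by simp
  finally show ?case
    unfolding W_def P_def Q_def by (simp only: mult.assoc)
qed

lemma sum_fold_symmetric:
  fixes g :: "nat \<Rightarrow> 'a::field_char_0"
  assumes "\<And>i. i < n \<Longrightarrow> g (n - Suc i) = g i"
  shows "(\<Sum>i=0..<n. g i) = 2 * (\<Sum>i=0..<n div 2. g i) + (1 - (-1) ^ n) / 2 * g (n div 2)"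
proof -
  define q where "q = n div 2"
  have "(\<Sum>i=0..<n. g i) = (\<Sum>i=0..<q. g i) + (\<Sum>i=q..<n-q. g i) + (\<Sum>i=n-q..<n. g i)"
    unfolding q_def by (simp add: sum.atLeastLessThan_concat)
  moreover have "(\<Sum>i=n-q..<n. g i) = (\<Sum>i=0..<q. g i)"
    by (rule sum.reindex_bij_witness[where i = "\<lambda>i. n - Suc i" and j = "\<lambda>i. n - Suc i"])
      (use assms in \<open>auto simp: q_def\<close>)
  moreover have "(\<Sum>i=q..<n-q. g i) = (1 - (-1) ^ n) / 2 * g q"
    by (cases "even n") (auto simp: q_def elim!: oddE)
  ultimately show ?thesis
    by (simp add: q_def)
qed

lemma sum_grid_fold_symmetric:
  fixes g :: "nat \<Rightarrow> nat \<Rightarrow> 'a::field_char_0"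
  assumes reflect_fst: "\<And>i j. i < n \<Longrightarrow> j < k \<Longrightarrow> g (n - Suc i) j = g i j"
    and reflect_snd: "\<And>i j. i < n \<Longrightarrow> j < k \<Longrightarrow> g i (k - Suc j) = g i j"
  shows "(\<Sum>i=0..<n. \<Sum>j=0..<k. g i j) =
      4 * (\<Sum>i=0..<n div 2. \<Sum>j=0..<k div 2. g i j)
    + (1 - (-1) ^ n) * (\<Sum>j=0..<k div 2. g (n div 2) j)
    + (1 - (-1) ^ k) * (\<Sum>i=0..<n div 2. g i (k div 2))
    + (1 / 4) * (1 - (-1) ^ n) * (1 - (-1) ^ k) * g (n div 2) (k div 2)"
proof -
  define c :: "nat \<Rightarrow> 'a" where "c l = (1 - (-1) ^ l) / 2" for l
  define row where "row i = (\<Sum>j=0..<k. g i j)" for i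
  have row_fold: "row i = 2 * (\<Sum>j=0..<k div 2. g i j) + c k * g i (k div 2)" if "i < n" for i
    unfolding row_def c_def using reflect_snd[OF that] by (rule sum_fold_symmetric)
  have "row (n - Suc i) = row i" if "i < n" for i
    unfolding row_def using reflect_fst[OF that] by simp
  then have "(\<Sum>i=0..<n. row i) = 2 * (\<Sum>i=0..<n div 2. row i) + c n * row (n div 2)"
    unfolding c_def by (rule sum_fold_symmetric)
  also have "c n * row (n div 2) = c n * (2 * (\<Sum>j=0..<k div 2. g (n div 2) j) + c k * g (n div 2) (k div 2))"
  proof (cases "even n")
    case False
    then have "n div 2 < n"
      by (simp add: odd_pos)
    then show ?thesis
      by (simp add: row_fold)
  qed (simp add: c_def)
  also have "(\<Sum>i=0..<n div 2. row i) = (\<Sum>i=0..<n div 2. 2 * (\<Sum>j=0..<k div 2. g i j) + c k * g i (k div 2))"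
    by (intro sum.cong) (simp_all add: row_fold)
  finally have "(\<Sum>i=0..<n. row i) =
      4 * (\<Sum>i=0..<n div 2. \<Sum>j=0..<k div 2. g i j)
    + (2 * c n) * (\<Sum>j=0..<k div 2. g (n div 2) j)
    + (2 * c k) * (\<Sum>i=0..<n div 2. g i (k div 2))
    + (1 / 4) * (2 * c n) * (2 * c k) * g (n div 2) (k div 2)"
    by (simp add: sum.distrib sum_distrib_left algebra_simps)
  moreover have "2 * c l = 1 - (-1) ^ l" for l
    by (simp add: c_def)
  ultimately show ?thesis
    by (simp only: row_def)
qed

lemma WHomPP_eq_walks:
  "WHomPP i j (Suc a) n k = walks ({0..<n} \<times> {0..<k}) (snd (box (Path n) (Path k)))\<^sup>=\<^sup>= a (i, j)"
  unfolding WHomPP_def using WHom_Path_from_eq_walks[OF symp_box[OF symp_Path symp_Path]] by simp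

lemma card_WHomPP_reflect:
  assumes "0 < m" and "i < n" and "j < k"
  shows "card (WHomPP (n - Suc i) j m n k) = card (WHomPP i j m n k)"
    and "card (WHomPP i (k - Suc j) m n k) = card (WHomPP i j m n k)"
proof -
  obtain a where m: "m = Suc a"
    using assms(1) gr0_implies_Suc by blast
  let ?V = "{0..<n} \<times> {0..<k}" and ?R = "(snd (box (Path n) (Path k)))\<^sup>=\<^sup>="
  have "card (walks ?V ?R a ((\<lambda>(x, y). (n - Suc x, y)) (i, j))) = card (walks ?V ?R a (i, j))"
    using assms(2,3) by (intro card_walks_involution) (auto simp: box_def Path_reflect)
  then show "card (WHomPP (n - Suc i) j m n k) = card (WHomPP i j m n k)"
    by (simp add: m WHomPP_eq_walks)
  have "card (walks ?V ?R a ((\<lambda>(x, y). (x, k - Suc y)) (i, j))) = card (walks ?V ?R a (i, j))"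
    using assms(2,3) by (intro card_walks_involution) (auto simp: box_def Path_reflect)
  then show "card (WHomPP i (k - Suc j) m n k) = card (WHomPP i j m n k)"
    by (simp add: m WHomPP_eq_walks)
qed

lemma card_WHomPP_eq_sum:
  assumes "0 < m" and "i < n" and "j < k"
  shows "card (WHomPP i j m n k) =
    (\<Sum>h = 0..m - 1. (m - 1 choose h) * card (HomP i (h + 1) n) * card (WHomP j (m - h) k))"
proof -
  obtain M where m: "m = Suc M"
    using assms(1) gr0_implies_Suc by blast
  have "HomP i (Suc h) n = walks {0..<n} (snd (Path n)) h i" for h
    unfolding HomP_def using Hom_Path_from_eq_walks[OF symp_Path] by simp
  moreover have "WHomP j (Suc t) k = walks {0..<k} (snd (Path k))\<^sup>=\<^sup>= t j" for t
    unfolding WHomP_def using WHom_Path_from_eq_walks[OF symp_Path] by simp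
  moreover have "card (WHomPP i j m n k) = (\<Sum>h\<le>M. (M choose h) *
      card (walks {0..<n} (snd (Path n)) h i) * card (walks {0..<k} (snd (Path k))\<^sup>=\<^sup>= (M - h) j))"
    using card_weak_walks_box[of "Path n" "Path k"] assms(2,3) by (simp add: m WHomPP_eq_walks irreflp_Path)
  ultimately show ?thesis
    by (simp add: m atLeast0AtMost Suc_diff_le)
qed

theorem theorem4:
  fixes m n k :: nat
  assumes "0 < m" and "0 < n" and "0 < k"
  shows "real (card (WHom (Path m) (box (Path n) (Path k)))) =
           4 * (\<Sum>i = 0..<n div 2. \<Sum>j = 0..<k div 2. real (card (WHomPP i j m n k)))
         + (1 - (-1) ^ n) * (\<Sum>j = 0..<k div 2. real (card (WHomPP (n div 2) j m n k)))
         + (1 - (-1) ^ k) * (\<Sum>i = 0..<n div 2. real (card (WHomPP i (k div 2) m n k)))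
         + (1 / 4) * (1 - (-1) ^ n) * (1 - (-1) ^ k) * real (card (WHomPP (n div 2) (k div 2) m n k))
       \<and> (\<forall>i < n. \<forall>j < k. card (WHomPP i j m n k) =
           (\<Sum>h = 0..m - 1. (m - 1 choose h) * card (HomP i (h + 1) n) * card (WHomP j (m - h) k)))"
proof
  have "real (card (WHom (Path m) (box (Path n) (Path k)))) =
      (\<Sum>i = 0..<n. \<Sum>j = 0..<k. real (card (WHomPP i j m n k)))"
    using card_WHom_Path_eq_sum[OF assms(1), of "box (Path n) (Path k)"]
    by (simp add: WHomPP_def sum.cartesian_product)
  also have "\<dots> = 4 * (\<Sum>i = 0..<n div 2. \<Sum>j = 0..<k div 2. real (card (WHomPP i j m n k)))
         + (1 - (-1) ^ n) * (\<Sum>j = 0..<k div 2. real (card (WHomPP (n div 2) j m n k)))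
         + (1 - (-1) ^ k) * (\<Sum>i = 0..<n div 2. real (card (WHomPP i (k div 2) m n k)))
         + (1 / 4) * (1 - (-1) ^ n) * (1 - (-1) ^ k) * real (card (WHomPP (n div 2) (k div 2) m n k))"
    using card_WHomPP_reflect[OF assms(1)] by (intro sum_grid_fold_symmetric) simp_all
  finally show "real (card (WHom (Path m) (box (Path n) (Path k)))) = \<dots>" .
  show "\<forall>i < n. \<forall>j < k. card (WHomPP i j m n k) =
      (\<Sum>h = 0..m - 1. (m - 1 choose h) * card (HomP i (h + 1) n) * card (WHomP j (m - h) k))"
    using card_WHomPP_eq_sum[OF assms(1)] by blast
qed

end
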